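(* Let $t\geq 1$ be an integer, $m=8t+4$ and $n=2^m+1$, and let $x$ be an odd integer. Then: (1) if $1\leq x\leq 2^{4t+2}-1$, $x$ is a coset leader; (2) if $2^{4t+2}+3\leq x\leq 2^{4t+3}-5$, $x$ is a coset leader; (3) if $2^{4t+3}+5\leq x\leq 2^{4t+3}+2^{4t+1}-3$, $x$ is a coset leader; (4) if $2^{4t+3}+2^{4t+1}+3\leq x\leq 2^{4t+3}+2^{4t+2}-3$, $x$ is a coset leader; (5) if $2^{4t+3}+2^{4t+2}+5\leq x\leq 2^{4t+3}+2^{4t+2}+2^{4t+1}-3$, $x$ is a coset leader; (6) if $x=2^{4t+2}+1$, or $2^{4t+3}-3\leq x\leq 2^{4t+3}+3$, or $2^{4t+3}+2^{4t+1}-1\leq x\leq 2^{4t+3}+2^{4t+1}+1$, or $2^{4t+3}+2^{4t+2}-1\leq x\leq 2^{4t+3}+2^{4t+2}+3$, or $2^{4t+3}+2^{4t+2}+2^{4t+1}-1\leq x\leq 2^{4t+3}+2^{4t+2}+2^{4t+1}+1$, then $x$ is not a coset leader.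
   Context: For $n=2^m+1$ and an integer $x$, the 2-cyclotomic coset of $x$ modulo $n$ is $C_x=\{x\cdot 2^{j} \bmod n : j\geq 0\}\subseteq\{0,1,\dots,n-1\}$. For $0\leq x\leq n-1$, "$x$ is a coset leader" means that $x$ is the smallest element of $C_x$. *)

theory Defs
  imports Main
begin

definition cyclotomic_coset :: "nat \<Rightarrow> nat \<Rightarrow> nat set" where
  "cyclotomic_coset n x = {x * 2 ^ j mod n | j. True}"

definition coset_leader :: "nat \<Rightarrow> nat \<Rightarrow> bool" where
  "coset_leader n x \<longleftrightarrow> x \<le> n - 1 \<and> (\<forall>y \<in> cyclotomic_coset n x. x \<le> y)"

end

theory Submission
  imports Defs
begin

text \<open>Since \<open>2^m \<equiv> -1 (mod n)\<close>, the coset of \<open>x\<close> consists of the residues \<open>r\<^sub>i = x 2^i mod n\<close>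
  and their reflections \<open>n - r\<^sub>i\<close> for \<open>i < m\<close>, so \<open>x\<close> is a leader iff \<open>x \<le> r\<^sub>i \<le> n - x\<close> for all
  \<open>i < m\<close>. With \<open>H = 2^(4t)\<close> we have \<open>n = 16 H\<^sup>2 + 1\<close>; writing \<open>2^m = P Q\<close> with \<open>Q = 2^i\<close> and
  \<open>x = q P + c\<close>, \<open>c < P\<close>, the residue is \<open>x Q \<equiv> c Q - q\<close>. For \<open>P \<le> H\<close> and for \<open>P \<ge> 16 H\<close> both
  bounds hold for every odd \<open>x \<le> 14 H + 1\<close>; for \<open>P \<in> {2H, 4H, 8H}\<close> a case analysis on \<open>c\<close> and \<open>q\<close>
  shows that they fail exactly for the twelve values of part (6), and for each of these an
  explicit \<open>i\<close> exhibits a coset element smaller than \<open>x\<close>.\<close>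

lemma mult_mod_Suc_of_split:
  fixes P Q N q c :: nat
  assumes "P * Q = N" and "c < P" and "q \<le> c * Q"
  shows "(q * P + c) * Q mod (N + 1) = c * Q - q"
proof -
  have "c * Q \<le> N" using assms(1,2) by (metis less_imp_le_nat mult_le_mono1)
  have "(q * P + c) * Q = c * Q - q + q * (N + 1)"
    using assms by (simp add: algebra_simps)
  then have "(q * P + c) * Q mod (N + 1) = (c * Q - q) mod (N + 1)"
    by (simp only: mod_mult_self1)
  also have "\<dots> = c * Q - q" using \<open>c * Q \<le> N\<close> by simp
  finally show ?thesis .
qed

lemma mult_mod_Suc_neg:
  fixes y N :: nat
  assumes "y mod (N + 1) \<noteq> 0"
  shows "y * N mod (N + 1) = N + 1 - y mod (N + 1)"
proof -
  define a s where "a = y div (N + 1)" and "s = y mod (N + 1) - 1"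
  have "y mod (N + 1) < N + 1" by simp
  then have s: "y mod (N + 1) = s + 1" "s < N" using assms unfolding s_def by linarith+
  have "y = a * (N + 1) + (s + 1)" unfolding a_def s(1)[symmetric] by (rule div_mult_mod_eq[symmetric])
  then have "y * N = (N - s) + (a * N + s) * (N + 1)"
    using s by (simp add: algebra_simps)
  then have "y * N mod (N + 1) = (N - s) mod (N + 1)" by (simp only: mod_mult_self1)
  then show ?thesis using s by simp
qed

lemma coset_leader_pow2_plus_one_iff:
  fixes m x :: nat
  assumes "0 < m"
  defines "n \<equiv> 2 ^ m + 1"
  shows "coset_leader n x \<longleftrightarrow>
    (\<forall>i<m. x \<le> x * 2 ^ i mod n \<and> x * 2 ^ i mod n + x \<le> n)"
proof -
  have reflect: "x * 2 ^ (i + m) mod n = n - x * 2 ^ i mod n" if "x * 2 ^ i mod n \<noteq> 0" for i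
    using mult_mod_Suc_neg[of "x * 2 ^ i" "2 ^ m"] that by (simp add: n_def power_add mult.assoc)
  have coset: "cyclotomic_coset n x = {x * 2 ^ j mod n | j. True}"
    by (simp add: cyclotomic_coset_def)
  show ?thesis
  proof
    assume leader: "coset_leader n x"
    show "\<forall>i<m. x \<le> x * 2 ^ i mod n \<and> x * 2 ^ i mod n + x \<le> n"
    proof (intro allI impI conjI)
      fix i
      have above: "x \<le> x * 2 ^ j mod n" for j
        using leader unfolding coset_leader_def coset by blast
      then show "x \<le> x * 2 ^ i mod n" .
      have "x * 2 ^ i mod n < n" by (simp add: n_def)
      then show "x * 2 ^ i mod n + x \<le> n"
        using above[of i] above[of "i + m"] reflect[of i]
        by (cases "x * 2 ^ i mod n = 0") auto
    qed
  next
    assume bounded: "\<forall>i<m. x \<le> x * 2 ^ i mod n \<and> x * 2 ^ i mod n + x \<le> n"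
    have "x \<le> x * 2 ^ j mod n \<and> x * 2 ^ j mod n + x \<le> n" for j
    proof (induction j rule: less_induct)
      case (less j)
      show ?case
      proof (cases "j < m")
        case False
        define i where "i = j - m"
        have j: "j = i + m" and "i < j" using False assms(1) by (simp_all add: i_def)
        with less.IH have "x \<le> x * 2 ^ i mod n \<and> x * 2 ^ i mod n + x \<le> n" by blast
        then show ?thesis unfolding j using reflect[of i] by (cases "x * 2 ^ i mod n = 0") auto
      qed (use bounded in blast)
    qed
    then have above: "x \<le> x * 2 ^ j mod n" for j by blast
    moreover have "x mod n < n" by (simp add: n_def)
    with above[of 0] have "x < n" by simp
    ultimately show "coset_leader n x" unfolding coset_leader_def coset by auto
  qed
qed

lemma residue_bounds_of_split:
  fixes P Q N x q c :: nat
  assumes "P * Q = N" and "c < P" and "x = q * P + c"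
    and "x + q \<le> c * Q" and "c * Q + x \<le> N + 1 + q"
  shows "x \<le> x * Q mod (N + 1) \<and> x * Q mod (N + 1) + x \<le> N + 1"
  using mult_mod_Suc_of_split[OF assms(1,2), of q] assms(3-5) by auto

lemma mult_Suc_le_16_sq:
  fixes H x y :: nat
  assumes "8 \<le> H" and "x \<le> 14 * H + 1" and "y \<le> H"
  shows "x * (y + 1) \<le> 16 * H\<^sup>2"
proof -
  have "x * (y + 1) \<le> (14 * H + 1) * (H + 1)" using assms by (intro mult_le_mono) auto
  also have "\<dots> = 14 * H\<^sup>2 + 15 * H + 1" by (simp add: algebra_simps power2_eq_square)
  also have "\<dots> \<le> 16 * H\<^sup>2" using mult_le_mono1[OF assms(1), of H] assms(1)
    unfolding power2_eq_square by linarith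
  finally show ?thesis .
qed

lemma residue_bounds_small_P:
  fixes H P Q x :: nat
  assumes "P * Q = 16 * H\<^sup>2" and "even P" and "0 < P" and "P \<le> H" and "8 \<le> H"
    and "odd x" and "x \<le> 14 * H + 1"
  shows "x \<le> x * Q mod (16 * H\<^sup>2 + 1) \<and> x * Q mod (16 * H\<^sup>2 + 1) + x \<le> 16 * H\<^sup>2 + 1"
proof (rule residue_bounds_of_split)
  define q c where "q = x div P" and "c = x mod P"
  show "P * Q = 16 * H\<^sup>2" "c < P" "x = q * P + c"
    using assms by (simp_all add: q_def c_def)
  have "odd c" using assms(2,6) \<open>x = q * P + c\<close> by auto
  then have "Q \<le> c * Q" by (cases c) auto
  have "(x + q) * P \<le> x * (P + 1)"
    using \<open>x = q * P + c\<close> by (simp add: algebra_simps)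
  also have "\<dots> \<le> P * Q" using mult_Suc_le_16_sq[OF assms(5,7,4)] assms(1) by simp
  finally have "x + q \<le> Q" using assms(3) by (simp add: mult.commute)
  then show "x + q \<le> c * Q" using \<open>Q \<le> c * Q\<close> by linarith
  have "(c + 1) * Q \<le> P * Q" using \<open>c < P\<close> by (intro mult_le_mono1) simp
  then show "c * Q + x \<le> 16 * H\<^sup>2 + 1 + q" using \<open>x + q \<le> Q\<close> assms(1) by simp
qed

lemma residue_bounds_large_P:
  fixes H P Q x :: nat
  assumes "P * Q = 16 * H\<^sup>2" and "16 * H \<le> P" and "8 \<le> H"
    and "0 < x" and "x \<le> 14 * H + 1"
  shows "x \<le> x * Q mod (16 * H\<^sup>2 + 1) \<and> x * Q mod (16 * H\<^sup>2 + 1) + x \<le> 16 * H\<^sup>2 + 1"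
proof (rule residue_bounds_of_split)
  show "P * Q = 16 * H\<^sup>2" "x < P" "x = 0 * P + x" using assms by simp_all
  have "16 * H * Q \<le> 16 * H * H" using assms(1,2) by (metis mult_le_mono1 power2_eq_square mult.assoc)
  then have "Q \<le> H" using assms(3) by simp
  moreover have "0 < Q" using assms(1,3) by (cases Q) auto
  ultimately show "x + 0 \<le> x * Q" "x * Q + x \<le> 16 * H\<^sup>2 + 1 + 0"
    using mult_Suc_le_16_sq[OF assms(3,5), of Q] by (simp_all add: algebra_simps)
qed

lemma residue_bounds_Q_8H:
  fixes H x :: nat
  assumes "8 \<le> H" and "odd x" and "x \<le> 14 * H + 1"
    and "x \<notin> {8*H+1, 10*H-1, 10*H+1, 12*H-1, 12*H+1, 14*H-1, 14*H+1}"
  shows "x \<le> x * (8*H) mod (16 * H\<^sup>2 + 1) \<and> x * (8*H) mod (16 * H\<^sup>2 + 1) + x \<le> 16 * H\<^sup>2 + 1"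
proof -
  define q c where "q = x div (2*H)" and "c = x mod (2*H)"
  have split: "(2*H) * (8*H) = 16 * H\<^sup>2" "c < 2*H" "x = q * (2*H) + c"
    using assms(1) unfolding q_def c_def by (simp_all add: power2_eq_square div_mult_mod_eq)
  have "q < 8" using assms(1,3) unfolding q_def by (simp add: div_less_iff_less_mult)
  then have qs: "q \<le> 3 \<or> q = 4 \<or> q = 5 \<or> q = 6 \<or> q = 7" by linarith
  have "odd c" using assms(2) split(3) by simp
  have HH: "8 * H \<le> H\<^sup>2" using assms(1) by (simp add: power2_eq_square)
  have "c = 1 \<or> c = 2*H - 1 \<or> (3 \<le> c \<and> c \<le> 2*H - 3)"
    using \<open>odd c\<close> split(2) by presburger
  then have "x + q \<le> c * (8*H) \<and> c * (8*H) + x \<le> 16 * H\<^sup>2 + 1 + q"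
  proof (elim disjE conjE)
    assume c: "c = 1"
    have "q \<le> 3" using qs assms(4) unfolding split(3) c by (elim disjE) simp_all
    then have "q * (2*H) \<le> 3 * (2*H)" by (rule mult_le_mono1)
    then show ?thesis unfolding c using split(3)[unfolded c] HH \<open>q \<le> 3\<close> assms(1) by linarith
  next
    assume c: "c = 2*H - 1"
    have "q \<le> 3" using qs assms(1,3,4) unfolding split(3) c by (elim disjE) simp_all
    then have "q * (2*H) \<le> 3 * (2*H)" by (rule mult_le_mono1)
    moreover have "c * (8*H) = 16 * H\<^sup>2 - 8 * H"
      using c by (simp add: power2_eq_square algebra_simps diff_mult_distrib)
    ultimately show ?thesis using split(3) HH assms(1) \<open>q \<le> 3\<close> c by linarith
  next
    assume c: "3 \<le> c" "c \<le> 2*H - 3"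
    have "q * (2*H) \<le> 7 * (2*H)" using \<open>q < 8\<close> by (intro mult_le_mono1) simp
    moreover have "3 * (8*H) \<le> c * (8*H)" using c by (intro mult_le_mono1)
    moreover have "c * (8*H) \<le> 16 * H\<^sup>2 - 24 * H"
      using mult_le_mono1[OF c(2), of "8*H"] by (simp add: power2_eq_square algebra_simps diff_mult_distrib)
    ultimately show ?thesis using split(3) HH assms(1) \<open>q < 8\<close> c by linarith
  qed
  then show ?thesis using residue_bounds_of_split[OF split(1,2,3)] by blast
qed

lemma residue_bounds_Q_4H:
  fixes H x :: nat
  assumes "8 \<le> H" and "odd x" and "x \<le> 14 * H + 1"
    and "x \<notin> {4*H+1, 8*H-1, 8*H+1, 12*H-1, 12*H+1, 12*H+3}"
  shows "x \<le> x * (4*H) mod (16 * H\<^sup>2 + 1) \<and> x * (4*H) mod (16 * H\<^sup>2 + 1) + x \<le> 16 * H\<^sup>2 + 1"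
proof -
  define q c where "q = x div (4*H)" and "c = x mod (4*H)"
  have split: "(4*H) * (4*H) = 16 * H\<^sup>2" "c < 4*H" "x = q * (4*H) + c"
    using assms(1) unfolding q_def c_def by (simp_all add: power2_eq_square div_mult_mod_eq)
  have "q < 4" using assms(1,3) unfolding q_def by (simp add: div_less_iff_less_mult)
  then have qs: "q = 0 \<or> q = 1 \<or> q = 2 \<or> q = 3" by linarith
  have "odd c" using assms(2) split(3) by simp
  have HH: "8 * H \<le> H\<^sup>2" using assms(1) by (simp add: power2_eq_square)
  have "c = 1 \<or> c = 3 \<or> c = 4*H - 1 \<or> c = 4*H - 3 \<or> (5 \<le> c \<and> c \<le> 4*H - 5)"
    using \<open>odd c\<close> split(2) by presburger
  then have "x + q \<le> c * (4*H) \<and> c * (4*H) + x \<le> 16 * H\<^sup>2 + 1 + q"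
  proof (elim disjE conjE)
    assume c: "c = 1"
    have "q = 0" using qs assms(4) unfolding split(3) c by (elim disjE) simp_all
    then show ?thesis unfolding c using split(3)[unfolded c] HH assms(1) by simp
  next
    assume c: "c = 3"
    have "q \<le> 2" using qs assms(4) unfolding split(3) c by (elim disjE) simp_all
    then have "q * (4*H) \<le> 2 * (4*H)" by (rule mult_le_mono1)
    then show ?thesis unfolding c using split(3)[unfolded c] HH \<open>q \<le> 2\<close> assms(1) by linarith
  next
    assume c: "c = 4*H - 1"
    have "q = 0" using qs assms(1,3,4) unfolding split(3) c by (elim disjE) simp_all
    moreover have "c * (4*H) = 16 * H\<^sup>2 - 4 * H"
      using c by (simp add: power2_eq_square algebra_simps diff_mult_distrib)
    ultimately show ?thesis using split(3) HH assms(1) c by (simp, linarith)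
  next
    assume c: "c = 4*H - 3"
    have "q \<le> 2" using qs assms(1,3) unfolding split(3) c by (elim disjE) simp_all
    then have "q * (4*H) \<le> 2 * (4*H)" by (rule mult_le_mono1)
    moreover have "c * (4*H) = 16 * H\<^sup>2 - 12 * H"
      using c by (simp add: power2_eq_square algebra_simps diff_mult_distrib)
    ultimately show ?thesis using split(3) HH assms(1) \<open>q \<le> 2\<close> c by linarith
  next
    assume c: "5 \<le> c" "c \<le> 4*H - 5"
    have "q * (4*H) \<le> 3 * (4*H)" using \<open>q < 4\<close> by (intro mult_le_mono1) simp
    moreover have "5 * (4*H) \<le> c * (4*H)" using c by (intro mult_le_mono1)
    moreover have "c * (4*H) \<le> 16 * H\<^sup>2 - 20 * H"
      using mult_le_mono1[OF c(2), of "4*H"] by (simp add: power2_eq_square algebra_simps diff_mult_distrib)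
    ultimately show ?thesis using split(3) HH assms(1) \<open>q < 4\<close> c by linarith
  qed
  then show ?thesis using residue_bounds_of_split[OF split(1,2,3)] by blast
qed

lemma residue_bounds_Q_2H:
  fixes H x :: nat
  assumes "8 \<le> H" and "odd x" and "x \<le> 14 * H + 1"
    and "x \<notin> {8*H-3, 8*H-1, 8*H+1, 8*H+3}"
  shows "x \<le> x * (2*H) mod (16 * H\<^sup>2 + 1) \<and> x * (2*H) mod (16 * H\<^sup>2 + 1) + x \<le> 16 * H\<^sup>2 + 1"
proof -
  define q c where "q = x div (8*H)" and "c = x mod (8*H)"
  have split: "(8*H) * (2*H) = 16 * H\<^sup>2" "c < 8*H" "x = q * (8*H) + c"
    using assms(1) unfolding q_def c_def by (simp_all add: power2_eq_square div_mult_mod_eq)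
  have "q < 2" using assms(1,3) unfolding q_def by (simp add: div_less_iff_less_mult)
  then have qs: "q = 0 \<or> q = 1" by linarith
  have "odd c" using assms(2) split(3) by simp
  have HH: "8 * H \<le> H\<^sup>2" using assms(1) by (simp add: power2_eq_square)
  have "c = 1 \<or> c = 3 \<or> c = 8*H - 1 \<or> c = 8*H - 3 \<or> (5 \<le> c \<and> c \<le> 8*H - 5)"
    using \<open>odd c\<close> split(2) by presburger
  then have "x + q \<le> c * (2*H) \<and> c * (2*H) + x \<le> 16 * H\<^sup>2 + 1 + q"
  proof (elim disjE conjE)
    assume c: "c = 1"
    have "q = 0" using qs assms(4) unfolding split(3) c by (elim disjE) simp_all
    then show ?thesis using split(3) HH assms(1) unfolding c by simp
  next
    assume c: "c = 3"
    have "q = 0" using qs assms(4) unfolding split(3) c by (elim disjE) simp_all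
    then show ?thesis using split(3) HH assms(1) unfolding c by simp
  next
    assume "c = 8*H - 1"
    then have False using qs assms(1,3,4) unfolding split(3) by (elim disjE) simp_all
    then show ?thesis ..
  next
    assume "c = 8*H - 3"
    then have False using qs assms(1,3,4) unfolding split(3) by (elim disjE) simp_all
    then show ?thesis ..
  next
    assume c: "5 \<le> c" "c \<le> 8*H - 5"
    have lower: "5 * (2*H) \<le> c * (2*H)" "c * 16 \<le> c * (2*H)"
      using c assms(1) by (intro mult_le_mono; simp)+
    from qs show ?thesis
    proof
      assume "q = 0"
      then have "x = c" using split(3) by simp
      moreover have "c * (2*H) \<le> 16 * H\<^sup>2 - 10 * H"
        using mult_le_mono1[OF c(2), of "2*H"] by (simp add: power2_eq_square algebra_simps diff_mult_distrib)
      ultimately show ?thesis using HH assms(1) c lower \<open>q = 0\<close> by linarith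
    next
      assume "q = 1"
      then have x: "x = 8 * H + c" using split(3) by simp
      then have "c \<le> 6 * H + 1" using assms(3) by simp
      then have "c * (2*H) \<le> 12 * H\<^sup>2 + 2 * H"
        using mult_le_mono1[of c "6 * H + 1" "2*H"] by (simp add: power2_eq_square algebra_simps)
      then show ?thesis using x HH assms(1) c lower \<open>q = 1\<close> \<open>c \<le> 6 * H + 1\<close> by linarith
    qed
  qed
  then show ?thesis using residue_bounds_of_split[OF split(1,2,3)] by blast
qed

definition exceptional :: "nat \<Rightarrow> nat set" where
  "exceptional H = {4*H+1, 8*H-3, 8*H-1, 8*H+1, 8*H+3, 10*H-1, 10*H+1,
     12*H-1, 12*H+1, 12*H+3, 14*H-1, 14*H+1}"

lemma residue_bounds_not_exceptional:
  fixes k i x :: nat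
  defines "H \<equiv> 2 ^ k"
  assumes "3 \<le> k" and "i < 2*k + 4" and "odd x" and "x \<le> 14 * H + 1"
    and "x \<notin> exceptional H"
  shows "x \<le> x * 2 ^ i mod (16 * H\<^sup>2 + 1) \<and> x * 2 ^ i mod (16 * H\<^sup>2 + 1) + x \<le> 16 * H\<^sup>2 + 1"
proof -
  define s where "s = 2*k + 4 - i"
  have H8: "8 \<le> H" unfolding H_def using power_increasing[OF assms(2), of "2::nat"] by simp
  have PQ: "2 ^ s * 2 ^ i = 16 * H\<^sup>2"
    using assms(3) by (simp add: s_def H_def flip: power_add power_mult)
      (simp add: power_add power_mult_distrib)
  consider "s \<le> k" | "s = k + 1" | "s = k + 2" | "s = k + 3" | "k + 4 \<le> s" by linarith
  then show ?thesis
  proof cases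
    case 1
    have "(2::nat) ^ s \<le> H" unfolding H_def using 1 by (rule power_increasing) simp
    moreover have "even ((2::nat) ^ s)" using assms(3) by (simp add: s_def)
    ultimately show ?thesis using residue_bounds_small_P[OF PQ] H8 assms(4,5) by simp
  next
    case 2
    then have "i = k + 3" using assms(3) unfolding s_def by linarith
    then have "2 ^ i = 8 * H" by (simp add: H_def power_add)
    then show ?thesis using residue_bounds_Q_8H[OF H8 assms(4,5)] assms(6) by (simp add: exceptional_def)
  next
    case 3
    then have "i = k + 2" using assms(3) unfolding s_def by linarith
    then have "2 ^ i = 4 * H" by (simp add: H_def power_add)
    then show ?thesis using residue_bounds_Q_4H[OF H8 assms(4,5)] assms(6) by (simp add: exceptional_def)
  next
    case 4
    then have "i = k + 1" using assms(3) unfolding s_def by linarith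
    then have "2 ^ i = 2 * H" by (simp add: H_def power_add)
    then show ?thesis using residue_bounds_Q_2H[OF H8 assms(4,5)] assms(6) by (simp add: exceptional_def)
  next
    case 5
    have "(2::nat) ^ (k + 4) \<le> 2 ^ s" using 5 by (rule power_increasing) simp
    then have "16 * H \<le> 2 ^ s" by (simp add: H_def power_add)
    moreover have "0 < x" using assms(4) by (cases x) auto
    ultimately show ?thesis using residue_bounds_large_P[OF PQ] H8 assms(5) by simp
  qed
qed

lemma not_coset_leader_of_split:
  fixes P i m x q c :: nat
  assumes "P * 2 ^ i = 2 ^ m" and "c < P" and "x = q * P + c" and "q \<le> c * 2 ^ i"
    and "c * 2 ^ i < x + q \<or> 2 ^ m + 1 + q < c * 2 ^ i + x"
  shows "\<not> coset_leader (2 ^ m + 1) x"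
proof -
  have residue: "x * 2 ^ i mod (2 ^ m + 1) = c * 2 ^ i - q"
    using mult_mod_Suc_of_split[OF assms(1,2,4)] assms(3) by simp
  have "1 < P"
  proof (rule ccontr)
    assume "\<not> 1 < P"
    then have "P = 1" using assms(2) by simp
    then show False using assms(2-5) by simp
  qed
  then have "1 * 2 ^ i < P * 2 ^ i" by (rule mult_less_mono1) simp
  then have "(2::nat) ^ i < 2 ^ m" using assms(1) by simp
  then have "i < m" by simp
  then show ?thesis
    using coset_leader_pow2_plus_one_iff[of m x] residue assms(4,5) by auto
qed

lemma not_coset_leader_exceptional_above:
  fixes k x :: nat
  defines "H \<equiv> 2 ^ k"
  assumes "3 \<le> k" and "x \<in> {4*H+1, 8*H+1, 8*H+3, 10*H+1, 12*H+1, 12*H+3, 14*H+1}"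
  shows "\<not> coset_leader (2 ^ (2*k + 4) + 1) x"
proof -
  have H8: "8 \<le> H" unfolding H_def using power_increasing[OF assms(2), of "2::nat"] by simp
  \<comment> \<open>Naming \<open>H\<^sup>2\<close> stops simp from cancelling \<open>8 H \<le> H\<^sup>2\<close> back to \<open>8 \<le> H\<close>.\<close>
  define S where "S = H\<^sup>2"
  have HS: "H * H = S" by (simp add: S_def power2_eq_square)
  have pow: "2 ^ (k+1) = 2 * H" "2 ^ (k+2) = 4 * H" "2 ^ (k+3) = 8 * H" "2 ^ (2*k + 4) = 16 * S"
    by (simp_all add: H_def S_def power_add power_mult_distrib flip: power_mult)
  have "8 * H \<le> S" using H8 HS by (metis mult_le_mono1)
  note split = not_coset_leader_of_split[where m = "2*k + 4", unfolded pow(4)]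
  note rules = pow H_def[symmetric] HS and bounds = H8 \<open>8 * H \<le> S\<close>
  from assms(3) have "\<not> coset_leader (16 * S + 1) x"
  proof (elim insertE emptyE)
    assume "x = 4*H + 1" then show ?thesis
      by (intro split[where P = "4*H" and i = "k+2" and q = 1 and c = 1];
          (simp add: rules)?; use bounds in linarith)
  next
    assume "x = 8*H + 1" then show ?thesis
      by (intro split[where P = "8*H" and i = "k+1" and q = 1 and c = 1];
          (simp add: rules)?; use bounds in linarith)
  next
    assume "x = 8*H + 3" then show ?thesis
      by (intro split[where P = "8*H" and i = "k+1" and q = 1 and c = 3];
          (simp add: rules)?; use bounds in linarith)
  next
    assume "x = 10*H + 1" then show ?thesis
      by (intro split[where P = "2*H" and i = "k+3" and q = 5 and c = 1];
          (simp add: rules)?; use bounds in linarith)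
  next
    assume "x = 12*H + 1" then show ?thesis
      by (intro split[where P = "4*H" and i = "k+2" and q = 3 and c = 1];
          (simp add: rules)?; use bounds in linarith)
  next
    assume "x = 12*H + 3" then show ?thesis
      by (intro split[where P = "4*H" and i = "k+2" and q = 3 and c = 3];
          (simp add: rules)?; use bounds in linarith)
  next
    assume "x = 14*H + 1" then show ?thesis
      by (intro split[where P = "2*H" and i = "k+3" and q = 7 and c = 1];
          (simp add: rules)?; use bounds in linarith)
  qed
  then show ?thesis unfolding pow(4) .
qed

lemma not_coset_leader_exceptional_below:
  fixes k x :: nat
  defines "H \<equiv> 2 ^ k"
  assumes "3 \<le> k" and "x \<in> {8*H-3, 8*H-1, 10*H-1, 12*H-1, 14*H-1}"
  shows "\<not> coset_leader (2 ^ (2*k + 4) + 1) x"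
proof -
  have H8: "8 \<le> H" unfolding H_def using power_increasing[OF assms(2), of "2::nat"] by simp
  define S where "S = H\<^sup>2"
  have HS: "H * H = S" by (simp add: S_def power2_eq_square)
  have pow: "2 ^ (k+1) = 2 * H" "2 ^ (k+2) = 4 * H" "2 ^ (k+3) = 8 * H" "2 ^ (2*k + 4) = 16 * S"
    by (simp_all add: H_def S_def power_add power_mult_distrib flip: power_mult)
  have "8 * H \<le> S" using H8 HS by (metis mult_le_mono1)
  have sq: "(8*H - 3) * (2*H) = 16 * S - 6 * H" "(8*H - 1) * (2*H) = 16 * S - 2 * H"
    "(4*H - 1) * (4*H) = 16 * S - 4 * H" "(2*H - 1) * (8*H) = 16 * S - 8 * H"
    by (simp_all add: HS[symmetric] algebra_simps diff_mult_distrib)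
  note split = not_coset_leader_of_split[where m = "2*k + 4", unfolded pow(4)]
  note rules = pow H_def[symmetric] HS sq[simplified] and bounds = H8 \<open>8 * H \<le> S\<close>
  from assms(3) have "\<not> coset_leader (16 * S + 1) x"
  proof (elim insertE emptyE)
    assume "x = 8*H - 3" then show ?thesis
      by (intro split[where P = "8*H" and i = "k+1" and q = 0 and c = "8*H - 3"];
          (simp add: rules)?; use bounds in linarith)
  next
    assume "x = 8*H - 1" then show ?thesis
      by (intro split[where P = "8*H" and i = "k+1" and q = 0 and c = "8*H - 1"];
          (simp add: rules)?; use bounds in linarith)
  next
    assume "x = 10*H - 1" then show ?thesis
      by (intro split[where P = "2*H" and i = "k+3" and q = 4 and c = "2*H - 1"];
          (simp add: rules)?; use bounds in linarith)
  next
    assume "x = 12*H - 1" then show ?thesis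
      by (intro split[where P = "4*H" and i = "k+2" and q = 2 and c = "4*H - 1"];
          (simp add: rules)?; use bounds in linarith)
  next
    assume "x = 14*H - 1" then show ?thesis
      by (intro split[where P = "2*H" and i = "k+3" and q = 6 and c = "2*H - 1"];
          (simp add: rules)?; use bounds in linarith)
  qed
  then show ?thesis unfolding pow(4) .
qed

lemma coset_leader_iff_not_exceptional:
  fixes k x :: nat
  assumes "3 \<le> k" and "odd x" and "x \<le> 14 * 2 ^ k + 1"
  shows "coset_leader (2 ^ (2*k + 4) + 1) x \<longleftrightarrow> x \<notin> exceptional (2 ^ k)"
proof
  assume "coset_leader (2 ^ (2*k + 4) + 1) x"
  then show "x \<notin> exceptional (2 ^ k)"
    using not_coset_leader_exceptional_above[OF assms(1)]
      not_coset_leader_exceptional_below[OF assms(1)]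
    unfolding exceptional_def by blast
next
  assume "x \<notin> exceptional (2 ^ k)"
  then have "\<forall>i < 2*k + 4. x \<le> x * 2 ^ i mod (16 * (2 ^ k)\<^sup>2 + 1)
      \<and> x * 2 ^ i mod (16 * (2 ^ k)\<^sup>2 + 1) + x \<le> 16 * (2 ^ k)\<^sup>2 + 1"
    using residue_bounds_not_exceptional assms by blast
  moreover have "(2::nat) ^ (2*k + 4) = 16 * (2 ^ k)\<^sup>2"
    by (simp add: power_add power_mult_distrib flip: power_mult)
  ultimately show "coset_leader (2 ^ (2*k + 4) + 1) x"
    using coset_leader_pow2_plus_one_iff[of "2*k + 4" x] by simp
qed

lemma odd_mem_exceptional_iff:
  fixes H x :: nat
  assumes "8 \<le> H" and "odd x"
  shows "x \<in> exceptional H \<longleftrightarrow> x = 4*H + 1 \<or> (8*H - 3 \<le> x \<and> x \<le> 8*H + 3)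
    \<or> (10*H - 1 \<le> x \<and> x \<le> 10*H + 1) \<or> (12*H - 1 \<le> x \<and> x \<le> 12*H + 3)
    \<or> (14*H - 1 \<le> x \<and> x \<le> 14*H + 1)"
proof -
  have "(8*H - 3 \<le> x \<and> x \<le> 8*H + 3) \<longleftrightarrow>
      x = 8*H - 3 \<or> x = 8*H - 1 \<or> x = 8*H + 1 \<or> x = 8*H + 3"
    "(10*H - 1 \<le> x \<and> x \<le> 10*H + 1) \<longleftrightarrow> x = 10*H - 1 \<or> x = 10*H + 1"
    "(12*H - 1 \<le> x \<and> x \<le> 12*H + 3) \<longleftrightarrow> x = 12*H - 1 \<or> x = 12*H + 1 \<or> x = 12*H + 3"
    "(14*H - 1 \<le> x \<and> x \<le> 14*H + 1) \<longleftrightarrow> x = 14*H - 1 \<or> x = 14*H + 1"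
    using assms by presburger+
  then show ?thesis unfolding exceptional_def by auto
qed

theorem theorem5p1:
  fixes t m n x :: nat
  assumes "t \<ge> 1" and "m = 8 * t + 4" and "n = 2 ^ m + 1" and "odd x"
  shows "(1 \<le> x \<and> x \<le> 2 ^ (4*t+2) - 1 \<longrightarrow> coset_leader n x)
    \<and> (2 ^ (4*t+2) + 3 \<le> x \<and> x \<le> 2 ^ (4*t+3) - 5 \<longrightarrow> coset_leader n x)
    \<and> (2 ^ (4*t+3) + 5 \<le> x \<and> x \<le> 2 ^ (4*t+3) + 2 ^ (4*t+1) - 3 \<longrightarrow> coset_leader n x)
    \<and> (2 ^ (4*t+3) + 2 ^ (4*t+1) + 3 \<le> x \<and> x \<le> 2 ^ (4*t+3) + 2 ^ (4*t+2) - 3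
         \<longrightarrow> coset_leader n x)
    \<and> (2 ^ (4*t+3) + 2 ^ (4*t+2) + 5 \<le> x
         \<and> x \<le> 2 ^ (4*t+3) + 2 ^ (4*t+2) + 2 ^ (4*t+1) - 3 \<longrightarrow> coset_leader n x)
    \<and> (x = 2 ^ (4*t+2) + 1
       \<or> (2 ^ (4*t+3) - 3 \<le> x \<and> x \<le> 2 ^ (4*t+3) + 3)
       \<or> (2 ^ (4*t+3) + 2 ^ (4*t+1) - 1 \<le> x \<and> x \<le> 2 ^ (4*t+3) + 2 ^ (4*t+1) + 1)
       \<or> (2 ^ (4*t+3) + 2 ^ (4*t+2) - 1 \<le> x \<and> x \<le> 2 ^ (4*t+3) + 2 ^ (4*t+2) + 3)
       \<or> (2 ^ (4*t+3) + 2 ^ (4*t+2) + 2 ^ (4*t+1) - 1 \<le> x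
           \<and> x \<le> 2 ^ (4*t+3) + 2 ^ (4*t+2) + 2 ^ (4*t+1) + 1)
       \<longrightarrow> \<not> coset_leader n x)"
proof -
  define H :: nat where "H = 2 ^ (4*t)"
  have "(2::nat) ^ 3 \<le> H" unfolding H_def using assms(1) by (intro power_increasing) simp_all
  then have H8: "8 \<le> H" by simp
  have pow: "2 ^ (4*t+1) = 2*H" "2 ^ (4*t+2) = 4*H" "2 ^ (4*t+3) = 8*H"
    by (simp_all add: H_def power_add)
  have "n = 2 ^ (2 * (4*t) + 4) + 1" using assms(2,3) by simp
  then have leader: "coset_leader n x \<longleftrightarrow> x \<notin> exceptional H" if "x \<le> 14*H + 1"
    using coset_leader_iff_not_exceptional[of "4*t" x] assms(1,4) that by (simp add: H_def)
  have sums: "8*H + 2*H = 10*H" "8*H + 4*H = 12*H" "12*H + 2*H = 14*H" by simp_all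
  show ?thesis unfolding pow sums
  proof (intro conjI impI; subst leader)
    assume listed: "x = 4*H + 1 \<or> (8*H - 3 \<le> x \<and> x \<le> 8*H + 3)
      \<or> (10*H - 1 \<le> x \<and> x \<le> 10*H + 1) \<or> (12*H - 1 \<le> x \<and> x \<le> 12*H + 3)
      \<or> (14*H - 1 \<le> x \<and> x \<le> 14*H + 1)"
    show "x \<le> 14*H + 1" "\<not> x \<notin> exceptional H"
      using listed H8 odd_mem_exceptional_iff[OF H8 assms(4)] by (linarith, blast)
  qed (use H8 in \<open>auto simp: exceptional_def\<close>)
qed

end
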